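(* For $k\in\mathbb{N}$ let $I_k=[2^{-(k+1)},2^{-k}]$ and let $\Phi_{I_k}$ be the function defined below. Then every nonzero element of $\mathrm{span}\{\Phi_{I_k}:k\in\mathbb{N}\}$ belongs to $C^0([0,1])\setminus AC_0$. In particular, $C^0([0,1])\setminus AC_0$ is lineable and the set $\mathcal{J}$ of Kurzweil integrable functions on $[0,1]$ which are not Lebesgue integrable is lineable.
   Context: Define $\Phi:[0,1]\to\mathbb{R}$ by $\Phi(x)=4x^2\sin\left(\frac{\pi}{4x^2}\right)$ for $x\in(0,1/2]$, $\Phi(x)=-4(1-x)^2\sin\left(\frac{\pi}{4(1-x)^2}\right)$ for $x\in(1/2,1)$, and $\Phi(0)=\Phi(1)=0$. For an interval $I=[a,b]\subset[0,1]$, $\Phi_I(x)=\Phi\left(\frac{x-a}{b-a}\right)$ for $x\in I$ and $\Phi_I(x)=0$ otherwise; $\phi_I=\Phi_I'$ (which exists everywhere). $C^0([0,1])$ denotes the set of (everywhere) differentiable real functions on $[0,1]$, and $AC_0$ the set of absolutely continuous functions $F$ on $[0,1]$ with $F(0)=0$. A subset $S$ of a vector space is lineable if $S\cup\{0\}$ contains an infinite-dimensional vector subspace. Kurzweil integral means the Henstock–Kurzweil integral. *)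

theory Defs
  imports "HOL-Analysis.Analysis"
begin

definition Phi :: "real \<Rightarrow> real" where
  "Phi x = (if 0 < x \<and> x \<le> 1/2 then 4 * x^2 * sin (pi / (4 * x^2))
            else if 1/2 < x \<and> x < 1 then - 4 * (1 - x)^2 * sin (pi / (4 * (1 - x)^2))
            else 0)"

definition PhiI :: "real \<Rightarrow> real \<Rightarrow> real \<Rightarrow> real" where
  "PhiI a b x = (if a \<le> x \<and> x \<le> b then Phi ((x - a) / (b - a)) else 0)"

definition PhiIk :: "nat \<Rightarrow> real \<Rightarrow> real" where
  "PhiIk k = PhiI (1 / 2 ^ (k + 1)) (1 / 2 ^ k)"

definition absolutely_continuous_on :: "real set \<Rightarrow> (real \<Rightarrow> real) \<Rightarrow> bool" where
  "absolutely_continuous_on S F \<longleftrightarrow>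
     (\<forall>e>0. \<exists>d>0. \<forall>(n::nat) (a::nat \<Rightarrow> real) (b::nat \<Rightarrow> real).
        (\<forall>i<n. a i \<le> b i \<and> {a i..b i} \<subseteq> S) \<and>
        (\<forall>i<n. \<forall>j<n. i \<noteq> j \<longrightarrow> b i \<le> a j \<or> b j \<le> a i) \<and>
        (\<Sum>i<n. b i - a i) < d
        \<longrightarrow> (\<Sum>i<n. \<bar>F (b i) - F (a i)\<bar>) < e)"

definition AC0 :: "(real \<Rightarrow> real) set" where
  "AC0 = {F. absolutely_continuous_on {0..1} F \<and> F 0 = 0}"

text \<open>C^0([0,1]): functions differentiable at every point of [0,1] (one-sided at the endpoints)\<close>
definition C0 :: "(real \<Rightarrow> real) set" where
  "C0 = {F. F differentiable_on {0..1}}"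

text \<open>Kurzweil (Henstock-Kurzweil) integrable on [0,1] but not Lebesgue integrable\<close>
definition JJ :: "(real \<Rightarrow> real) set" where
  "JJ = {f. f integrable_on {0..1} \<and> \<not> f absolutely_integrable_on {0..1}}"

definition fsubspace :: "(real \<Rightarrow> real) set \<Rightarrow> bool" where
  "fsubspace W \<longleftrightarrow> (\<lambda>x. 0) \<in> W \<and> (\<forall>f\<in>W. \<forall>g\<in>W. (\<lambda>x. f x + g x) \<in> W) \<and>
     (\<forall>c::real. \<forall>f\<in>W. (\<lambda>x. c * f x) \<in> W)"

definition flin_indep :: "(real \<Rightarrow> real) set \<Rightarrow> bool" where
  "flin_indep B \<longleftrightarrow> (\<forall>F c. finite F \<and> F \<subseteq> B \<and> (\<forall>x. (\<Sum>f\<in>F. c f * f x) = 0)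
       \<longrightarrow> (\<forall>f\<in>F. c f = (0::real)))"

definition lineable :: "(real \<Rightarrow> real) set \<Rightarrow> bool" where
  "lineable S \<longleftrightarrow> (\<exists>W. fsubspace W \<and> W \<subseteq> S \<union> {\<lambda>x. 0} \<and>
       (\<exists>B\<subseteq>W. infinite B \<and> flin_indep B))"

end

theory Submission
  imports Defs
begin

(*
  Near 0 the profile Phi is 4x^2 sin(pi/(4x^2)): it is differentiable everywhere (the factor x^2
  kills the derivative at 0 and 1, and both branches have slope 4 pi at 1/2), but between the
  points (8m+10)^(-1/2) and (8m+8)^(-1/2), where the sine is 1 and 0, it drops by 2/(4m+5).
  These intervals are disjoint and decrease, so their tails have arbitrarily small total length,
  while the drops form a divergent harmonic-type series; hence Phi is not absolutely continuous.
  The PhiIk are copies of Phi on the disjoint intervals I_k, so a combination with c k \<noteq> 0 shows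
  the same behaviour on the copy of these intervals inside I_k. By the fundamental theorem of
  calculus the same intervals give divergent sums of integrals of the derivative, which is
  therefore Kurzweil but not Lebesgue integrable. Evaluation at one point of each I_k makes
  both families linearly independent.
*)

lemma has_real_derivative_0_if_quadratic_bound:
  fixes f :: "real \<Rightarrow> real"
  assumes "\<And>y. \<bar>f y\<bar> \<le> C * (y - a)^2" "f a = 0"
  shows "(f has_real_derivative 0) (at a)"
  unfolding has_field_derivative_iff
proof (rule Lim_null_comparison)
  have "\<bar>f y / (y - a)\<bar> \<le> C * \<bar>y - a\<bar>" for y
  proof (cases "y = a")
    case False
    then have "\<bar>f y\<bar> / \<bar>y - a\<bar> \<le> C * \<bar>y - a\<bar>^2 / \<bar>y - a\<bar>"
      using assms(1)[of y] by (intro divide_right_mono) auto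
    also have "\<dots> = C * \<bar>y - a\<bar>"
      using False by (simp add: power2_eq_square field_simps)
    finally show ?thesis by (simp add: abs_divide)
  qed (use assms in auto)
  then show "\<forall>\<^sub>F y in at a. norm ((f y - f a) / (y - a)) \<le> C * \<bar>y - a\<bar>"
    using assms(2) by simp
  show "((\<lambda>y. C * \<bar>y - a\<bar>) \<longlongrightarrow> 0) (at a)"
    by (rule tendsto_eq_intros | simp)+
qed

lemma has_real_derivative_split:
  fixes f :: "real \<Rightarrow> real"
  assumes "(f has_real_derivative D) (at x within {..x})" "(f has_real_derivative D) (at x within {x..})"
  shows "(f has_real_derivative D) (at x)"
proof -
  have "((\<lambda>y. (f y - f x) / (y - x)) \<longlongrightarrow> D) (at x within {..x} \<union> {x..})"
    using assms unfolding has_field_derivative_iff by (simp add: Lim_within_Un)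
  moreover have "{..x} \<union> {x..} = UNIV" by auto
  ultimately show ?thesis unfolding has_field_derivative_iff by simp
qed

lemma decreasing_intervals_decseq:
  fixes a b :: "nat \<Rightarrow> real"
  assumes "\<And>m. a m < b m" "\<And>m. b (Suc m) \<le> a m"
  shows "decseq b"
  using assms by (intro decseq_SucI) (meson less_imp_le order_trans)

lemma decreasing_intervals_separated:
  fixes a b :: "nat \<Rightarrow> real"
  assumes lt: "\<And>m. a m < b m" and le: "\<And>m. b (Suc m) \<le> a m" and "i \<noteq> j"
  shows "b i \<le> a j \<or> b j \<le> a i"
proof -
  have "b m' \<le> a m" if "m < m'" for m m'
  proof -
    have "b m' \<le> b (Suc m)"
      using decreasing_intervals_decseq[of a b, OF lt le] that by (simp add: decseqD)
    then show ?thesis using le[of m] by linarith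
  qed
  then show ?thesis using \<open>i \<noteq> j\<close> by (cases "i < j") auto
qed

lemma partial_sums_unbounded_if_not_summable:
  fixes f :: "nat \<Rightarrow> real"
  assumes "\<And>n. 0 \<le> f n" "\<not> summable f"
  obtains N where "B < (\<Sum>i<N. f i)"
proof -
  have "\<not> (\<forall>N. (\<Sum>i<N. f i) \<le> B)"
    using summableI_nonneg_bounded[of f B] assms by blast
  then show ?thesis using that by (auto simp: not_le)
qed

lemma not_absolutely_continuous_on_if_jumps_not_summable:
  fixes F :: "real \<Rightarrow> real" and a b :: "nat \<Rightarrow> real"
  assumes lt: "\<And>m. a m < b m" and le: "\<And>m. b (Suc m) \<le> a m" and lim: "b \<longlonglongrightarrow> L"
    and sub: "\<And>m. {a m..b m} \<subseteq> S"
    and jumps: "\<not> summable (\<lambda>m. \<bar>F (b m) - F (a m)\<bar>)"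
  shows "\<not> absolutely_continuous_on S F"
proof
  assume "absolutely_continuous_on S F"
  from this[unfolded absolutely_continuous_on_def, rule_format, OF zero_less_one]
  obtain d where "d > 0" and small: "\<forall>(n::nat) a' b'.
      (\<forall>i<n. a' i \<le> b' i \<and> {a' i..b' i} \<subseteq> S) \<and>
      (\<forall>i<n. \<forall>j<n. i \<noteq> j \<longrightarrow> b' i \<le> a' j \<or> b' j \<le> a' i) \<and>
      (\<Sum>i<n. b' i - a' i) < d \<longrightarrow> (\<Sum>i<n. \<bar>F (b' i) - F (a' i)\<bar>) < 1"
    by blast
  from lim \<open>d > 0\<close> obtain M where "\<forall>n\<ge>M. \<bar>b n - L\<bar> < d"
    unfolding lim_sequentially dist_real_def by blast
  then have M: "b M - L < d" by (meson abs_less_iff order_refl)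
  have "\<not> summable (\<lambda>i. \<bar>F (b (i + M)) - F (a (i + M))\<bar>)"
    using jumps summable_iff_shift[where f = "\<lambda>m. \<bar>F (b m) - F (a m)\<bar>"] by simp
  then obtain N where N: "1 < (\<Sum>i<N. \<bar>F (b (i + M)) - F (a (i + M))\<bar>)"
    using partial_sums_unbounded_if_not_summable[where B = 1] by (metis abs_ge_zero)
  have "(\<Sum>i<N. b (i + M) - a (i + M)) \<le> (\<Sum>i<N. b (i + M) - b (Suc i + M))"
    using le by (intro sum_mono) (simp add: algebra_simps)
  also have "\<dots> = b M - b (N + M)"
    using sum_lessThan_telescope'[of "\<lambda>i. b (i + M)" N] by simp
  also have "\<dots> \<le> b M - L"
    using decseq_ge[OF decreasing_intervals_decseq[of a b, OF lt le] lim] by simp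
  finally have "(\<Sum>i<N. b (i + M) - a (i + M)) < d" using M by linarith
  moreover have "b (i + M) \<le> a (j + M) \<or> b (j + M) \<le> a (i + M)" if "i \<noteq> j" for i j
    using that by (intro decreasing_intervals_separated[of a b, OF lt le]) simp
  ultimately have "(\<Sum>i<N. \<bar>F (b (i + M)) - F (a (i + M))\<bar>) < 1"
    using lt sub by (intro small[rule_format]) (auto intro: less_imp_le)
  with N show False by simp
qed

lemma not_absolutely_integrable_on_if_integrals_not_summable:
  fixes f :: "real \<Rightarrow> real" and a b :: "nat \<Rightarrow> real"
  assumes lt: "\<And>m. a m < b m" and le: "\<And>m. b (Suc m) \<le> a m"
    and sub: "\<And>m. {a m..b m} \<subseteq> S"
    and integrals: "\<not> summable (\<lambda>m. \<bar>integral {a m..b m} f\<bar>)"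
  shows "\<not> f absolutely_integrable_on S"
proof
  define h where "h x = (if x \<in> S then f x else 0)" for x
  assume "f absolutely_integrable_on S"
  then have "h absolutely_integrable_on UNIV"
    unfolding h_def by (simp add: absolutely_integrable_restrict_UNIV)
  then obtain B where B: "\<And>D. D division_of \<Union>D \<Longrightarrow> (\<Sum>K\<in>D. norm (integral K h)) \<le> B"
    by (rule absolutely_integrable_bounded_variation) blast
  obtain N where N: "B < (\<Sum>m<N. \<bar>integral {a m..b m} f\<bar>)"
    using partial_sums_unbounded_if_not_summable[OF _ integrals] by (metis abs_ge_zero)
  let ?I = "\<lambda>m. {a m..b m}"
  have disjoint: "interior (?I m) \<inter> interior (?I m') = {}" if "m \<noteq> m'" for m m'
    using decreasing_intervals_separated[of a b, OF lt le that] by auto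
  have "inj_on ?I {..<N}"
  proof (rule inj_onI)
    fix m m' assume "?I m = ?I m'"
    then show "m = m'"
      using disjoint[of m m'] lt[of m] by (metis greaterThanLessThan_empty_iff inf.idem interior_atLeastAtMost_real not_less)
  qed
  have division: "?I ` {..<N} division_of \<Union>(?I ` {..<N})"
  proof (rule division_ofI)
    fix K1 K2 assume "K1 \<in> ?I ` {..<N}" "K2 \<in> ?I ` {..<N}" "K1 \<noteq> K2"
    then obtain m m' where "K1 = ?I m" "K2 = ?I m'" "m \<noteq> m'" by blast
    then show "interior K1 \<inter> interior K2 = {}"
      using disjoint by simp
  qed (auto simp: less_imp_le[OF lt])
  have "integral (?I m) h = integral (?I m) f" for m
    using sub[of m] unfolding h_def by (intro integral_cong) auto
  then have "(\<Sum>m<N. \<bar>integral (?I m) f\<bar>) = (\<Sum>K\<in>?I ` {..<N}. norm (integral K h))"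
    using \<open>inj_on ?I {..<N}\<close> by (simp add: sum.reindex)
  also have "\<dots> \<le> B"
    by (rule B[OF division])
  finally show False using N by simp
qed

lemma not_summable_const_over_linear:
  assumes "c \<noteq> 0" shows "\<not> summable (\<lambda>m. c / (4 * real m + 5))"
proof
  assume "summable (\<lambda>m. c / (4 * real m + 5))"
  then have "summable (\<lambda>m. 5 / c * (c / (4 * real m + 5)))"
    by (rule summable_mult)
  then have "summable (\<lambda>m. inverse (real (m + 1)))"
    by (rule summable_comparison_test') (use assms in \<open>auto simp: field_simps\<close>)
  then show False
    using not_summable_harmonic[where 'a = real] summable_iff_shift[where f = "\<lambda>n. inverse (real n)" and k = 1]
    by blast
qed

section \<open>Lineability from a biorthogonal family\<close>

definition finite_combinations :: "(nat \<Rightarrow> real \<Rightarrow> real) \<Rightarrow> (real \<Rightarrow> real) set" where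
  "finite_combinations u = {g. \<exists>n c. g = (\<lambda>x. \<Sum>k<n. c k * u k x)}"

lemma sum_lessThan_extend_by_zero:
  assumes "n \<le> N"
  shows "(\<Sum>k<N. (if k < n then c k else 0) * (v k :: real)) = (\<Sum>k<(n::nat). c k * v k)"
proof -
  have "(\<Sum>k<N. (if k < n then c k else 0) * v k) = (\<Sum>k<n. (if k < n then c k else 0) * v k)"
    using assms by (intro sum.mono_neutral_right) auto
  then show ?thesis by simp
qed

lemma fsubspace_finite_combinations: "fsubspace (finite_combinations u)"
  unfolding fsubspace_def
proof (intro conjI ballI allI)
  show "(\<lambda>x. 0) \<in> finite_combinations u"
    unfolding finite_combinations_def by (rule CollectI, rule exI[of _ 0]) simp
next
  fix f g assume "f \<in> finite_combinations u" "g \<in> finite_combinations u"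
  then obtain n1 c1 n2 c2 where f: "f = (\<lambda>x. \<Sum>k<n1. c1 k * u k x)" and g: "g = (\<lambda>x. \<Sum>k<n2. c2 k * u k x)"
    unfolding finite_combinations_def by blast
  define c where "c k = (if k < n1 then c1 k else 0) + (if k < n2 then c2 k else 0)" for k
  have "(\<lambda>x. f x + g x) = (\<lambda>x. \<Sum>k<max n1 n2. c k * u k x)"
    unfolding f g c_def by (simp add: distrib_right sum.distrib sum_lessThan_extend_by_zero)
  then show "(\<lambda>x. f x + g x) \<in> finite_combinations u"
    unfolding finite_combinations_def mem_Collect_eq by (intro exI)
next
  fix a :: real and f assume "f \<in> finite_combinations u"
  then obtain n c where f: "f = (\<lambda>x. \<Sum>k<n. c k * u k x)"
    unfolding finite_combinations_def by blast
  have "(\<lambda>x. a * f x) = (\<lambda>x. \<Sum>k<n. (a * c k) * u k x)"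
    unfolding f by (simp add: sum_distrib_left mult.assoc)
  then show "(\<lambda>x. a * f x) \<in> finite_combinations u"
    unfolding finite_combinations_def mem_Collect_eq by (intro exI)
qed

lemma range_subset_finite_combinations: "range u \<subseteq> finite_combinations u"
proof
  fix g assume "g \<in> range u"
  then obtain k where "g = u k" by auto
  then have "g = (\<lambda>x. \<Sum>j<Suc k. (if j = k then 1 else 0) * u j x)"
    by (simp add: if_distrib cong: if_cong)
  then show "g \<in> finite_combinations u"
    unfolding finite_combinations_def mem_Collect_eq by (intro exI)
qed

lemma flin_indep_range_if_biorthogonal:
  fixes u :: "nat \<Rightarrow> real \<Rightarrow> real" and p :: "nat \<Rightarrow> real"
  assumes nz: "\<And>k. u k (p k) \<noteq> 0" and z: "\<And>j k. j \<noteq> k \<Longrightarrow> u j (p k) = 0"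
  shows "flin_indep (range u)"
  unfolding flin_indep_def
proof (intro allI impI ballI)
  fix F c f
  assume H: "finite F \<and> F \<subseteq> range u \<and> (\<forall>x. (\<Sum>f\<in>F. c f * f x) = 0)" and "f \<in> F"
  then obtain k where fk: "f = u k" by auto
  have "g (p k) = 0" if "g \<in> F - {f}" for g
  proof -
    from that H obtain j where "g = u j" by auto
    with that fk show ?thesis using z[of j k] by auto
  qed
  then have "(\<Sum>g\<in>F - {f}. c g * g (p k)) = 0"
    by (intro sum.neutral) auto
  moreover have "(\<Sum>g\<in>F. c g * g (p k)) = c f * f (p k) + (\<Sum>g\<in>F - {f}. c g * g (p k))"
    using H \<open>f \<in> F\<close> by (intro sum.remove) auto
  ultimately have "c f * f (p k) = 0" using H by simp
  then show "c f = 0" using nz[of k] fk by simp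
qed

lemma lineable_if_biorthogonal_family:
  fixes u :: "nat \<Rightarrow> real \<Rightarrow> real" and p :: "nat \<Rightarrow> real"
  assumes nz: "\<And>k. u k (p k) \<noteq> 0" and z: "\<And>j k. j \<noteq> k \<Longrightarrow> u j (p k) = 0"
    and mem: "\<And>n c k. k < n \<Longrightarrow> c k \<noteq> 0 \<Longrightarrow> (\<lambda>x. \<Sum>j<n. c j * u j x) \<in> S"
  shows "lineable S"
  unfolding lineable_def
proof (intro exI conjI)
  show "fsubspace (finite_combinations u)"
    by (rule fsubspace_finite_combinations)
  show "finite_combinations u \<subseteq> S \<union> {\<lambda>x. 0}"
  proof
    fix g assume "g \<in> finite_combinations u"
    then obtain n c where g: "g = (\<lambda>x. \<Sum>k<n. c k * u k x)"
      unfolding finite_combinations_def by blast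
    show "g \<in> S \<union> {\<lambda>x. 0}"
    proof (cases "\<exists>k<n. c k \<noteq> 0")
      case False
      then have "g = (\<lambda>x. 0)" unfolding g by (intro ext sum.neutral) auto
      then show ?thesis by simp
    qed (use mem g in blast)
  qed
  have "inj u"
    using nz z by (metis injI)
  then show "infinite (range u)"
    using finite_imageD by blast
  show "range u \<subseteq> finite_combinations u" "flin_indep (range u)"
    using range_subset_finite_combinations flin_indep_range_if_biorthogonal[of u p, OF nz z] .
qed

section \<open>The derivative of Phi\<close>

definition chirp :: "real \<Rightarrow> real" where
  "chirp x = 4 * x^2 * sin (pi / (4 * x^2))"

definition chirp' :: "real \<Rightarrow> real" where
  "chirp' x = 8 * x * sin (pi / (4 * x^2)) - 2 * pi / x * cos (pi / (4 * x^2))"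

definition phi :: "real \<Rightarrow> real" where
  "phi y = (if 0 < y \<and> y \<le> 1/2 then chirp' y else if 1/2 < y \<and> y < 1 then chirp' (1 - y) else 0)"

lemma chirp_has_derivative:
  assumes "x \<noteq> 0" shows "(chirp has_real_derivative chirp' x) (at x)"
proof -
  have "(chirp has_real_derivative
     4 * (2 * x) * sin (pi / (4 * x^2)) + 4 * x^2 * (cos (pi / (4 * x^2)) * (- (pi * (4 * (2*x))) / (4 * x^2)^2))) (at x)"
    unfolding chirp_def[abs_def] using assms by (intro derivative_eq_intros) (auto simp: power2_eq_square)
  also have "4 * (2 * x) * sin (pi / (4 * x^2)) + 4 * x^2 * (cos (pi / (4 * x^2)) * (- (pi * (4 * (2*x))) / (4 * x^2)^2)) = chirp' x"
    using assms unfolding chirp'_def by (simp add: field_simps power2_eq_square)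
  finally show ?thesis .
qed

lemma abs_chirp_le: "\<bar>chirp x\<bar> \<le> 4 * x^2"
  unfolding chirp_def by (simp add: abs_mult mult_left_le)

lemma Phi_eq_chirp:
  "Phi x = (if 0 < x \<and> x \<le> 1/2 then chirp x else if 1/2 < x \<and> x < 1 then - chirp (1 - x) else 0)"
  unfolding Phi_def chirp_def by simp

lemma Phi_eq_0: "x \<le> 0 \<or> 1 \<le> x \<Longrightarrow> Phi x = 0"
  unfolding Phi_def by auto

lemma phi_eq_0: "x \<le> 0 \<or> 1 \<le> x \<Longrightarrow> phi x = 0"
  unfolding phi_def by auto

lemma Phi_reflect: "Phi (1 - x) = - Phi x"
proof (cases "x = 1/2")
  case True
  show ?thesis unfolding True by (simp add: Phi_def power2_eq_square)
qed (auto simp: Phi_def)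

lemma phi_reflect: "phi (1 - x) = phi x"
proof (cases "x = 1/2")
  case True
  show ?thesis unfolding True by simp
qed (auto simp: phi_def)

lemma Phi_has_derivative_left: "y \<le> 1/2 \<Longrightarrow> (Phi has_real_derivative phi y) (at y)"
proof -
  assume "y \<le> 1/2"
  then consider "y < 0" | "y = 0" | "0 < y \<and> y < 1/2" | "y = 1/2" by linarith
  then show ?thesis
  proof cases
    case 1
    show ?thesis
      by (rule has_field_derivative_transform_within_open[of "\<lambda>_. 0" _ _ "{..<0}"])
         (use 1 in \<open>auto simp: phi_eq_0 Phi_eq_0\<close>)
  next
    case 2
    have "\<bar>Phi y\<bar> \<le> 4 * (y - 0)^2" for y
    proof (cases "1/2 < y \<and> y < 1")
      case True
      then have "(1 - y)^2 \<le> y^2" by (intro power_mono) auto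
      moreover have "\<bar>Phi y\<bar> = \<bar>chirp (1 - y)\<bar>" using True by (simp add: Phi_eq_chirp)
      ultimately show ?thesis using abs_chirp_le[of "1 - y"] by simp
    qed (use abs_chirp_le[of y] in \<open>auto simp: Phi_eq_chirp\<close>)
    then show ?thesis
      using has_real_derivative_0_if_quadratic_bound[of Phi 4 0] 2 by (simp add: phi_eq_0 Phi_eq_0)
  next
    case 3
    then have "phi y = chirp' y" by (simp add: phi_def)
    moreover have "(Phi has_real_derivative chirp' y) (at y)"
      by (rule has_field_derivative_transform_within_open[OF chirp_has_derivative, of y "{0<..<1/2}"])
         (use 3 in \<open>auto simp: Phi_eq_chirp\<close>)
    ultimately show ?thesis by simp
  next
    case 4
    have chirp_half: "chirp (1/2) = 0"
      by (simp add: chirp_def power2_eq_square)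
    have "(Phi has_real_derivative chirp' (1/2)) (at (1/2) within {..1/2})"
    proof (rule has_field_derivative_transform_within[where d="1/2"])
      show "(chirp has_real_derivative chirp' (1/2)) (at (1/2) within {..1/2})"
        by (rule has_field_derivative_at_within[OF chirp_has_derivative]) simp
    qed (auto simp: dist_real_def Phi_eq_chirp)
    moreover have "(Phi has_real_derivative chirp' (1/2)) (at (1/2) within {1/2..})"
    proof (rule has_field_derivative_transform_within[where d="1/2"])
      have "((\<lambda>x. - chirp (1 - x)) has_real_derivative - (chirp' (1 - 1/2) * - 1)) (at (1/2))"
        by (rule DERIV_minus, rule DERIV_chain2[OF chirp_has_derivative])
           (auto intro!: derivative_eq_intros)
      then show "((\<lambda>x. - chirp (1 - x)) has_real_derivative chirp' (1/2)) (at (1/2) within {1/2..})"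
        by (auto intro: has_field_derivative_at_within)
      have "Phi x = - chirp (1 - x)" if "1/2 \<le> x" "x < 1" for x
      proof (cases "x = 1/2")
        case True
        show ?thesis unfolding True by (simp add: Phi_eq_chirp chirp_half)
      qed (use that in \<open>simp add: Phi_eq_chirp\<close>)
      then show "\<And>x. x \<in> {1/2..} \<Longrightarrow> dist x (1/2) < 1/2 \<Longrightarrow> - chirp (1 - x) = Phi x"
        by (simp add: dist_real_def)
    qed auto
    ultimately show ?thesis
      unfolding 4 by (simp add: has_real_derivative_split phi_def)
  qed
qed

lemma Phi_has_derivative: "(Phi has_real_derivative phi y) (at y)"
proof (cases "y \<le> 1/2")
  case False
  have "((\<lambda>x. - Phi (1 - x)) has_real_derivative - (phi (1 - y) * - 1)) (at y)"
    using False by (intro DERIV_minus DERIV_chain2[OF Phi_has_derivative_left])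
      (auto intro!: derivative_eq_intros)
  then show ?thesis by (simp add: Phi_reflect phi_reflect)
qed (rule Phi_has_derivative_left)

section \<open>Peaks and zeros of Phi\<close>

definition Phi_peak :: "nat \<Rightarrow> real" where
  "Phi_peak m = sqrt (1 / (8 * real m + 10))"

definition Phi_zero :: "nat \<Rightarrow> real" where
  "Phi_zero m = sqrt (1 / (8 * real m + 8))"

lemma Phi_peak_pos: "0 < Phi_peak m"
  unfolding Phi_peak_def by simp

lemma Phi_zero_pos: "0 < Phi_zero m"
  unfolding Phi_zero_def by simp

lemma Phi_peak_less_zero: "Phi_peak m < Phi_zero m"
  unfolding Phi_peak_def Phi_zero_def by (simp add: frac_less2)

lemma Phi_zero_Suc_less_peak: "Phi_zero (Suc m) < Phi_peak m"
  unfolding Phi_peak_def Phi_zero_def by (simp add: frac_less2)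

lemma Phi_zero_less_half: "Phi_zero m < 1/2"
proof -
  have "Phi_zero m < sqrt ((1/2)^2)"
    unfolding Phi_zero_def by (subst real_sqrt_less_iff) (simp add: field_simps)
  then show ?thesis by simp
qed

lemma Phi_peak_less_one: "Phi_peak m < 1"
  using Phi_peak_less_zero[of m] Phi_zero_less_half[of m] by simp

lemma Phi_zero_tendsto_0: "Phi_zero \<longlonglongrightarrow> 0"
proof -
  have "Phi_zero = (\<lambda>m. sqrt (inverse (real (Suc m)) / 8))"
    unfolding Phi_zero_def by (intro ext arg_cong[where f = sqrt]) (simp add: field_simps)
  moreover have "(\<lambda>m. inverse (real (Suc m)) / 8) \<longlonglongrightarrow> 0"
    by (intro tendsto_divide_zero LIMSEQ_inverse_real_of_nat)
  ultimately show ?thesis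
    using tendsto_real_sqrt by fastforce
qed

lemma Phi_at_peak: "Phi (Phi_peak m) = 2 / (4 * real m + 5)"
proof -
  have sq: "(Phi_peak m)^2 = 1 / (8 * real m + 10)"
    unfolding Phi_peak_def by simp
  have "pi / (4 * (Phi_peak m)^2) = 2 * real (Suc m) * pi + pi / 2"
    unfolding sq by (simp add: field_simps)
  then have "sin (pi / (4 * (Phi_peak m)^2)) = 1"
    by (simp only: sin_add sin_2npi cos_2npi) simp
  moreover have "Phi_peak m \<le> 1/2"
    using Phi_peak_less_zero[of m] Phi_zero_less_half[of m] by simp
  ultimately have "Phi (Phi_peak m) = 4 * (Phi_peak m)^2"
    using Phi_peak_pos[of m] unfolding Phi_def by simp
  then show ?thesis unfolding sq by (simp add: field_simps)
qed

lemma Phi_at_zero: "Phi (Phi_zero m) = 0"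
proof -
  have "pi / (4 * (Phi_zero m)^2) = real (2 * Suc m) * pi"
    unfolding Phi_zero_def by (simp add: field_simps)
  then have "sin (pi / (4 * (Phi_zero m)^2)) = 0"
    by (simp only: sin_npi)
  then show ?thesis
    using Phi_zero_less_half[of m] unfolding Phi_def by simp
qed

section \<open>Rescaling to the intervals I_k\<close>

definition Ik_coord :: "nat \<Rightarrow> real \<Rightarrow> real" where
  "Ik_coord k x = 2^(k+1) * x - 1"

definition Ik_point :: "nat \<Rightarrow> real \<Rightarrow> real" where
  "Ik_point k p = (1 + p) / 2^(k+1)"

lemma PhiIk_eq_Phi_Ik_coord: "PhiIk k x = Phi (Ik_coord k x)"
proof -
  have len: "1 / 2 ^ k - 1 / 2 ^ (k + 1) = 1 / (2::real) ^ (k + 1)"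
    by (simp add: field_simps)
  have "(x - 1 / 2 ^ (k + 1)) / (1 / 2 ^ (k + 1)) = 2^(k+1) * x - (1::real)"
    by (simp add: field_simps)
  moreover have "Phi (2^(k+1) * x - 1) = 0" if "\<not> (1 / 2 ^ (k + 1) \<le> x \<and> x \<le> 1 / (2::real) ^ k)"
    using that by (intro Phi_eq_0) (auto simp: field_simps)
  ultimately show ?thesis
    unfolding PhiIk_def PhiI_def Ik_coord_def len by auto
qed

definition phiIk :: "nat \<Rightarrow> real \<Rightarrow> real" where
  "phiIk k x = 2^(k+1) * phi (Ik_coord k x)"

lemma PhiIk_has_derivative: "(PhiIk k has_real_derivative phiIk k x) (at x)"
proof -
  have "(Ik_coord k has_real_derivative 2^(k+1)) (at x)"
    unfolding Ik_coord_def[abs_def] by (auto intro!: derivative_eq_intros)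
  then have "((\<lambda>x. Phi (Ik_coord k x)) has_real_derivative phi (Ik_coord k x) * 2^(k+1)) (at x)"
    by (rule DERIV_chain2[OF Phi_has_derivative])
  then show ?thesis
    unfolding phiIk_def PhiIk_eq_Phi_Ik_coord[abs_def] by (simp add: mult.commute)
qed

lemma Ik_coord_Ik_point [simp]: "Ik_coord k (Ik_point k p) = p"
  unfolding Ik_coord_def Ik_point_def by simp

lemma Ik_coord_Ik_point_other:
  assumes "j \<noteq> k" "0 < p" "p < 1"
  shows "Ik_coord j (Ik_point k p) \<le> 0 \<or> 1 \<le> Ik_coord j (Ik_point k p)"
proof (cases "j < k")
  case True
  then obtain d where d: "k + 1 = (j + 1) + Suc d" using less_imp_Suc_add by fastforce
  have "Ik_coord j (Ik_point k p) = (1 + p) / (2 * 2^d) - 1"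
    unfolding Ik_coord_def Ik_point_def d power_add by (simp add: field_simps)
  moreover have "1 + p \<le> 2 * 2^d"
    using assms one_le_power[of "2::real" d] by linarith
  ultimately show ?thesis by (simp add: divide_le_eq)
next
  case False
  with assms obtain d where d: "j + 1 = (k + 1) + Suc d" using less_imp_Suc_add[of k j] by fastforce
  have "Ik_coord j (Ik_point k p) = (1 + p) * (2 * 2^d) - 1"
    unfolding Ik_coord_def Ik_point_def d power_add by simp
  moreover have "1 \<le> (1 + p) * 2^d"
    using assms mult_mono[of 1 "1 + p" 1 "2^d"] by simp
  ultimately show ?thesis by linarith
qed

lemma PhiIk_at_other_Ik_point:
  assumes "j \<noteq> k" "0 < p" "p < 1"
  shows "PhiIk j (Ik_point k p) = 0"
  unfolding PhiIk_eq_Phi_Ik_coord using Ik_coord_Ik_point_other[OF assms] by (rule Phi_eq_0)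

lemma phiIk_at_other_Ik_point:
  assumes "j \<noteq> k" "0 < p" "p < 1"
  shows "phiIk j (Ik_point k p) = 0"
  unfolding phiIk_def using phi_eq_0[OF Ik_coord_Ik_point_other[OF assms]] by simp

lemma PhiIk_at_Ik_peak: "PhiIk k (Ik_point k (Phi_peak m)) = 2 / (4 * real m + 5)"
  by (simp add: PhiIk_eq_Phi_Ik_coord Phi_at_peak)

lemma phiIk_at_Ik_midpoint: "phiIk k (Ik_point k (1/2)) = 2^(k+1) * (4 * pi)"
  by (simp add: phiIk_def phi_def chirp'_def power2_eq_square)

lemma PhiIk_sum_at_Ik_point:
  assumes "k < n" "0 < p" "p < 1"
  shows "(\<Sum>j<n. c j * PhiIk j (Ik_point k p)) = c k * Phi p"
proof -
  have "(\<Sum>j<n. c j * PhiIk j (Ik_point k p)) = (\<Sum>j<n. if j = k then c k * Phi p else 0)"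
    using assms PhiIk_at_other_Ik_point by (intro sum.cong) (auto simp: PhiIk_eq_Phi_Ik_coord)
  then show ?thesis using assms by simp
qed

lemma Ik_point_strict_mono: "p < q \<Longrightarrow> Ik_point k p < Ik_point k q"
  unfolding Ik_point_def by (simp add: divide_strict_right_mono)

lemma Ik_point_in_unit_interval:
  assumes "0 \<le> p" "p \<le> 1" shows "Ik_point k p \<in> {0..1}"
proof -
  have "1 + p \<le> 2 * 2^k"
    using assms one_le_power[of "2::real" k] by linarith
  then show ?thesis using assms unfolding Ik_point_def by (simp add: divide_le_eq)
qed

lemma Ik_peak_less_zero: "Ik_point k (Phi_peak m) < Ik_point k (Phi_zero m)"
  by (intro Ik_point_strict_mono Phi_peak_less_zero)

lemma Ik_zero_Suc_less_peak: "Ik_point k (Phi_zero (Suc m)) < Ik_point k (Phi_peak m)"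
  by (intro Ik_point_strict_mono Phi_zero_Suc_less_peak)

lemma Ik_peak_zero_subset: "{Ik_point k (Phi_peak m)..Ik_point k (Phi_zero m)} \<subseteq> {0..1}"
  using Ik_point_in_unit_interval[of "Phi_peak m" k] Ik_point_in_unit_interval[of "Phi_zero m" k]
    Phi_peak_pos[of m] Phi_peak_less_zero[of m] Phi_zero_less_half[of m] by auto

lemma PhiIk_sum_jump:
  assumes "k < n"
  shows "\<bar>(\<Sum>j<n. c j * PhiIk j (Ik_point k (Phi_zero m))) - (\<Sum>j<n. c j * PhiIk j (Ik_point k (Phi_peak m)))\<bar>
    = \<bar>c k\<bar> * (2 / (4 * real m + 5))"
proof -
  have "Phi_zero m < 1"
    using Phi_zero_less_half[of m] by simp
  then show ?thesis
    using assms Phi_peak_pos[of m] Phi_zero_pos[of m] Phi_peak_less_one[of m]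
    by (simp add: PhiIk_sum_at_Ik_point Phi_at_peak Phi_at_zero abs_mult)
qed

lemma PhiIk_sum_has_derivative:
  "((\<lambda>x. \<Sum>j<n. c j * PhiIk j x) has_real_derivative (\<Sum>j<n. c j * phiIk j x)) (at x)"
  by (intro DERIV_sum DERIV_cmult PhiIk_has_derivative)

lemma PhiIk_sum_in_C0: "(\<lambda>x. \<Sum>j<n. c j * PhiIk j x) \<in> C0"
  unfolding C0_def differentiable_on_def
  using PhiIk_sum_has_derivative real_differentiable_def
  by (blast intro: has_field_derivative_at_within)

lemma PhiIk_sum_not_absolutely_continuous:
  assumes "k < n" "c k \<noteq> 0"
  shows "\<not> absolutely_continuous_on {0..1} (\<lambda>x. \<Sum>j<n. c j * PhiIk j x)"
proof (rule not_absolutely_continuous_on_if_jumps_not_summable)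
  show "(\<lambda>m. Ik_point k (Phi_zero m)) \<longlonglongrightarrow> Ik_point k 0"
    unfolding Ik_point_def by (intro tendsto_intros Phi_zero_tendsto_0) simp
  show "\<not> summable (\<lambda>m. \<bar>(\<Sum>j<n. c j * PhiIk j (Ik_point k (Phi_zero m))) -
                         (\<Sum>j<n. c j * PhiIk j (Ik_point k (Phi_peak m)))\<bar>)"
    using assms not_summable_const_over_linear[of "\<bar>c k\<bar> * 2"] by (simp add: PhiIk_sum_jump)
qed (use Ik_peak_less_zero Ik_zero_Suc_less_peak Ik_peak_zero_subset in \<open>auto intro: less_imp_le\<close>)

lemma phiIk_sum_has_integral:
  assumes "u \<le> v"
  shows "((\<lambda>x. \<Sum>j<n. c j * phiIk j x) has_integral
           (\<Sum>j<n. c j * PhiIk j v) - (\<Sum>j<n. c j * PhiIk j u)) {u..v}"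
  using assms PhiIk_sum_has_derivative
  by (intro fundamental_theorem_of_calculus)
     (auto simp: has_real_derivative_iff_has_vector_derivative intro: has_vector_derivative_at_within)

lemma phiIk_sum_not_absolutely_integrable:
  assumes "k < n" "c k \<noteq> 0"
  shows "\<not> (\<lambda>x. \<Sum>j<n. c j * phiIk j x) absolutely_integrable_on {0..1}"
proof (rule not_absolutely_integrable_on_if_integrals_not_summable)
  have "integral {Ik_point k (Phi_peak m)..Ik_point k (Phi_zero m)} (\<lambda>x. \<Sum>j<n. c j * phiIk j x) =
    (\<Sum>j<n. c j * PhiIk j (Ik_point k (Phi_zero m))) - (\<Sum>j<n. c j * PhiIk j (Ik_point k (Phi_peak m)))" for m
    using Ik_peak_less_zero by (intro integral_unique phiIk_sum_has_integral less_imp_le)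
  then show "\<not> summable (\<lambda>m. \<bar>integral {Ik_point k (Phi_peak m)..Ik_point k (Phi_zero m)} (\<lambda>x. \<Sum>j<n. c j * phiIk j x)\<bar>)"
    using assms not_summable_const_over_linear[of "\<bar>c k\<bar> * 2"] by (simp add: PhiIk_sum_jump)
qed (use Ik_peak_less_zero Ik_zero_Suc_less_peak Ik_peak_zero_subset in \<open>auto intro: less_imp_le\<close>)

lemma PhiIk_sum_in_C0_minus_AC0:
  assumes "k < n" "c k \<noteq> 0"
  shows "(\<lambda>x. \<Sum>j<n. c j * PhiIk j x) \<in> C0 - AC0"
  using PhiIk_sum_in_C0 PhiIk_sum_not_absolutely_continuous[of k n c, OF assms]
  unfolding AC0_def by blast

lemma phiIk_sum_in_JJ:
  assumes "k < n" "c k \<noteq> 0"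
  shows "(\<lambda>x. \<Sum>j<n. c j * phiIk j x) \<in> JJ"
  using has_integral_integrable[OF phiIk_sum_has_integral[of 0 1]] phiIk_sum_not_absolutely_integrable[of k n c, OF assms]
  unfolding JJ_def by simp

theorem mainTheorem10:
  shows "(\<forall>(n::nat) (c::nat \<Rightarrow> real).
            (\<exists>x\<in>{0..1}. (\<Sum>k<n. c k * PhiIk k x) \<noteq> 0) \<longrightarrow>
            (\<lambda>x. \<Sum>k<n. c k * PhiIk k x) \<in> C0 - AC0)
         \<and> lineable (C0 - AC0) \<and> lineable JJ"
proof -
  have "(\<lambda>x. \<Sum>k<n. c k * PhiIk k x) \<in> C0 - AC0" if "(\<Sum>k<n. c k * PhiIk k x) \<noteq> 0" for n c x
  proof -
    from that obtain k where "k < n" "c k \<noteq> 0"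
      by (metis (mono_tags, lifting) mult_eq_0_iff sum.neutral lessThan_iff)
    then show ?thesis by (rule PhiIk_sum_in_C0_minus_AC0)
  qed
  moreover have "lineable (C0 - AC0)"
    by (rule lineable_if_biorthogonal_family[where p = "\<lambda>k. Ik_point k (Phi_peak 0)",
          OF _ _ PhiIk_sum_in_C0_minus_AC0])
       (simp_all add: PhiIk_at_Ik_peak PhiIk_at_other_Ik_point Phi_peak_pos Phi_peak_less_one)
  moreover have "lineable JJ"
    by (rule lineable_if_biorthogonal_family[where p = "\<lambda>k. Ik_point k (1/2)", OF _ _ phiIk_sum_in_JJ])
       (simp_all add: phiIk_at_Ik_midpoint phiIk_at_other_Ik_point)
  ultimately show ?thesis by blast
qed

end
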